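(* For $n\in\mathbb N$, $$\Phi^*_n(1)=\begin{cases}0 & n=1,\\ p^e & n=p^e \text{ with } p \text{ prime},\ e\ge1,\\ 1&\text{otherwise}.\end{cases}$$ Equivalently, $\Phi^*_n(1)=e^{\Lambda^*(n)}$ for all $n>1$.
   Context: $d\mid\mid n$ means $d\mid n$ and $\gcd(d,n/d)=1$; $(j,n)_*=\max\{d: d\mid j,\ d\mid\mid n\}$; $\Phi^*_n(x)=\prod_{1\le j\le n,\ (j,n)_*=1}(x-e^{2\pi i j/n})$. The unitary von Mangoldt function is $\Lambda^*(n)=a\log p$ if $n=p^a$ is a prime power with $a\ge1$, and $\Lambda^*(n)=0$ otherwise. *)

theory Defs
  imports "HOL-Complex_Analysis.Complex_Analysis" "HOL-Computational_Algebra.Computational_Algebra"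
begin

definition unitary_dvd :: "nat \<Rightarrow> nat \<Rightarrow> bool" where
  "unitary_dvd d n \<longleftrightarrow> d dvd n \<and> coprime d (n div d)"

definition unitary_gcd :: "nat \<Rightarrow> nat \<Rightarrow> nat" where
  "unitary_gcd j n = Max {d. d dvd j \<and> unitary_dvd d n}"

definition unitary_cyclotomic :: "nat \<Rightarrow> complex poly" where
  "unitary_cyclotomic n =
     (\<Prod>j\<in>{j. 1 \<le> j \<and> j \<le> n \<and> unitary_gcd j n = 1}.
        [:- cis (2 * pi * real j / real n), 1:])"

definition unitary_mangoldt :: "nat \<Rightarrow> real" where
  "unitary_mangoldt n =
     (if \<exists>p a. prime p \<and> a \<ge> 1 \<and> n = p ^ a
      then real (multiplicity (THE p. prime p \<and> p dvd n) n) * ln (real (THE p. prime p \<and> p dvd n))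
      else 0)"

end

theory Submission
  imports Defs "HOL-Number_Theory.Prime_Powers"
begin

text \<open>Let \<open>\<zeta> = exp(2\<pi>i/n)\<close>. Then \<open>\<Phi>*_n(1)\<close> is the product of \<open>1 - \<zeta>^j\<close> over the \<open>j\<close> with
  \<open>(j,n)_* = 1\<close>, and \<open>(j,n)_* = 1\<close> holds iff no prime power part \<open>p^v_p(n)\<close> of \<open>n\<close> divides \<open>j\<close>;
  for \<open>n > 1\<close> this excludes \<open>j = n\<close>. Removing the multiples of a divisor \<open>q\<close> from such a
  product divides it by the corresponding product at level \<open>n/q\<close>, and the unsieved
  product of \<open>1 - \<zeta>^j\<close> over \<open>0 < j < n\<close> equals \<open>n\<close>. Hence sieving by pairwise coprime
  divisors \<open>q\<^sub>1, \<dots>, q\<^sub>r > 1\<close> of \<open>n\<close> leaves \<open>n\<close>, \<open>q\<^sub>1\<close> or \<open>1\<close> according as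
  \<open>r = 0\<close>, \<open>r = 1\<close> or \<open>r \<ge> 2\<close>; the prime power parts of \<open>n\<close> form a single part exactly when \<open>n\<close> is a prime power.\<close>

definition unity_root :: "nat \<Rightarrow> nat \<Rightarrow> complex" where
  "unity_root n k = cis (2 * pi * real k / real n)"

lemma unity_root_0 [simp]: "unity_root n 0 = 1"
  by (simp add: unity_root_def)

lemma unity_root_mult_mult: "q > 0 \<Longrightarrow> unity_root (q * n) (q * k) = unity_root n k"
  by (simp add: unity_root_def field_simps)

lemma prod_pCons_unity_roots:
  assumes "n > 0"
  shows "(\<Prod>k<n. [:- unity_root n k, 1:]) = monom 1 n - 1"
proof -
  let ?p = "monom (1::complex) n - 1"
  have poly_p: "poly ?p z = z ^ n - 1" for z
    by (simp add: poly_monom)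
  have "coeff ?p n = 1"
    using assms by (simp add: coeff_monom)
  moreover have "degree ?p \<le> n"
    by (rule degree_diff_le) (simp_all add: degree_monom_le)
  ultimately have monic: "lead_coeff ?p = 1"
    by (metis le_antisym le_degree zero_neq_one)
  have "rsquarefree ?p"
    unfolding rsquarefree_roots
  proof (intro allI notI)
    fix z assume z: "poly ?p z = 0 \<and> poly (pderiv ?p) z = 0"
    then have "z ^ n = 1"
      using poly_p by simp
    then have "z \<noteq> 0"
      using assms by (auto simp: power_0_left)
    moreover have "poly (pderiv ?p) z = of_nat n * z ^ (n - 1)"
      by (simp add: pderiv_diff pderiv_monom poly_monom)
    ultimately show False
      using z assms by simp
  qed
  then have "?p = (\<Prod>z\<in>{z. z ^ n = 1}. [:-z, 1:])"
    using complex_poly_decompose_rsquarefree[of ?p] monic poly_p by simp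
  also have "\<dots> = (\<Prod>k<n. [:- unity_root n k, 1:])"
    unfolding unity_root_def
    by (rule prod.reindex_bij_betw[symmetric, OF Complex.bij_betw_roots_unity[OF assms]])
  finally show ?thesis ..
qed

lemma prod_one_minus_unity_roots:
  assumes "n > 0"
  shows "(\<Prod>k\<in>{1..<n}. 1 - unity_root n k) = of_nat n"
proof -
  let ?Q = "\<Prod>k\<in>{1..<n}. [:- unity_root n k, 1:]"
  have "{..<n} = insert 0 {1..<n}"
    using assms by auto
  then have "[:-1, 1:] * ?Q = monom 1 n - 1"
    using prod_pCons_unity_roots[OF assms] by simp
  also have "\<dots> = [:-1, 1:] * (\<Sum>i<n. monom 1 i)"
    by (subst poly_eq_poly_eq_iff[symmetric])
       (simp add: fun_eq_iff poly_sum poly_monom power_diff_1_eq algebra_simps)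
  finally have "?Q = (\<Sum>i<n. monom 1 i)"
    by (metis mult_left_cancel pCons_eq_0_iff zero_neq_one)
  then have "poly ?Q 1 = of_nat n"
    by (simp add: poly_sum poly_monom)
  then show ?thesis
    by (simp add: poly_prod)
qed

definition sieved_unity_prod :: "nat \<Rightarrow> nat set \<Rightarrow> complex" where
  "sieved_unity_prod n D =
     (\<Prod>j\<in>{j. 0 < j \<and> j < n \<and> (\<forall>q\<in>D. \<not> q dvd j)}. 1 - unity_root n j)"

lemma sieved_unity_prod_empty: "n > 0 \<Longrightarrow> sieved_unity_prod n {} = of_nat n"
  using prod_one_minus_unity_roots[of n]
  by (simp add: sieved_unity_prod_def atLeastLessThan_def atLeast_def lessThan_def
      Collect_conj_eq Int_commute Suc_le_eq)

text \<open>Since \<open>q\<close> is coprime to \<open>D\<close>, a multiple \<open>q k\<close> avoids \<open>D\<close> iff \<open>k\<close> does, and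
  \<open>unity_root n (q k) = unity_root (n/q) k\<close>.\<close>
lemma sieved_unity_prod_insert:
  assumes "q > 0" "q dvd n" and coprime_D: "\<forall>d\<in>D. coprime d q"
  shows "sieved_unity_prod n D =
           sieved_unity_prod n (insert q D) * sieved_unity_prod (n div q) D"
proof -
  obtain m where n: "n = q * m"
    using assms by blast
  let ?avoids = "\<lambda>D j. \<forall>d\<in>D. \<not> d dvd j"
  let ?A = "{j. 0 < j \<and> j < n \<and> ?avoids D j}"
  let ?B = "{k. 0 < k \<and> k < m \<and> ?avoids D k}"
  have multiples: "?A \<inter> {j. q dvd j} = (\<lambda>k. q * k) ` ?B"
  proof (intro equalityI subsetI)
    fix j assume "j \<in> ?A \<inter> {j. q dvd j}"
    then obtain k where "j = q * k" "0 < j" "j < n" "?avoids D j"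
      by auto
    moreover have "?avoids D k"
      using \<open>j = q * k\<close> \<open>?avoids D j\<close> by (auto intro: dvd_mult)
    ultimately show "j \<in> (\<lambda>k. q * k) ` ?B"
      using n by auto
  next
    fix j assume "j \<in> (\<lambda>k. q * k) ` ?B"
    then obtain k where "j = q * k" "k \<in> ?B"
      by blast
    then show "j \<in> ?A \<inter> {j. q dvd j}"
      using assms n by (auto simp: coprime_dvd_mult_right_iff)
  qed
  have "sieved_unity_prod n D =
          (\<Prod>j\<in>?A - {j. q dvd j}. 1 - unity_root n j) *
          (\<Prod>j\<in>?A \<inter> {j. q dvd j}. 1 - unity_root n j)"
    unfolding sieved_unity_prod_def
    by (subst prod.Int_Diff[of ?A _ "{j. q dvd j}"]) (auto simp: mult.commute)
  also have "(\<Prod>j\<in>?A \<inter> {j. q dvd j}. 1 - unity_root n j) =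
             (\<Prod>k\<in>?B. 1 - unity_root n (q * k))"
    unfolding multiples using assms by (subst prod.reindex) (auto intro: inj_onI)
  also have "\<dots> = sieved_unity_prod (n div q) D"
    unfolding sieved_unity_prod_def n using assms by (simp add: unity_root_mult_mult)
  moreover have "?A - {j. q dvd j} = {j. 0 < j \<and> j < n \<and> ?avoids (insert q D) j}"
    by auto
  ultimately show ?thesis
    unfolding sieved_unity_prod_def by simp
qed

lemma sieved_unity_prod_coprime_divisors:
  assumes "finite D" "pairwise coprime D" "\<forall>q\<in>D. q > 1 \<and> q dvd n" "n > 0"
  shows "sieved_unity_prod n D =
           (if D = {} then of_nat n else if card D = 1 then of_nat (\<Prod>D) else 1)"
  using assms
proof (induction D arbitrary: n rule: finite_induct)
  case empty
  then show ?case
    by (simp add: sieved_unity_prod_empty)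
next
  case (insert q D)
  let ?val = "\<lambda>n. if D = {} then of_nat n else if card D = 1 then of_nat (\<Prod>D) else 1 :: complex"
  have q: "q > 1" "q dvd n"
    using insert.prems by auto
  then obtain m where n: "n = q * m"
    by blast
  have coprime_D: "\<forall>d\<in>D. coprime d q"
    using insert.prems(1) insert.hyps(2) by (auto simp: pairwise_insert)
  have D_dvd_m: "\<forall>d\<in>D. d > 1 \<and> d dvd m"
    using insert.prems(2) coprime_D n by (auto simp: coprime_dvd_mult_right_iff)
  have "m > 0"
    using insert.prems(3) n by simp
  have IH_n: "sieved_unity_prod n D = ?val n" and IH_m: "sieved_unity_prod m D = ?val m"
    using insert.IH insert.prems D_dvd_m \<open>m > 0\<close> by (auto simp: pairwise_insert)
  have "sieved_unity_prod n D = sieved_unity_prod n (insert q D) * ?val m"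
    using sieved_unity_prod_insert[of q n D] q coprime_D n IH_m by simp
  moreover have "?val m \<noteq> 0"
    using \<open>m > 0\<close> D_dvd_m insert.hyps(1) by (auto simp: prod_zero_iff)
  ultimately have "sieved_unity_prod n (insert q D) = ?val n / ?val m"
    using IH_n by (simp add: field_simps)
  moreover have "card (insert q D) = 1 \<longleftrightarrow> D = {}"
    using insert.hyps by auto
  moreover have "?val n / ?val m = (if D = {} then of_nat q else 1)"
    using n \<open>m > 0\<close> \<open>?val m \<noteq> 0\<close> by (cases "D = {}") auto
  ultimately show ?case
    by simp
qed

lemma unitary_dvd_prime_power_part:
  assumes "prime p"
  shows "unitary_dvd (p ^ multiplicity p n) n"
proof (cases "n = 0")
  case False
  then have "coprime p (n div p ^ multiplicity p n)"
    using assms by (intro prime_imp_coprime multiplicity_decompose) auto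
  then show ?thesis
    unfolding unitary_dvd_def by (simp add: multiplicity_dvd)
qed (simp add: unitary_dvd_def)

lemma prime_power_part_dvd_unitary_divisor:
  assumes "n \<noteq> 0" "unitary_dvd d n" "prime p" "p dvd d"
  shows "p ^ multiplicity p n dvd d"
proof -
  have "d dvd n" and coprime: "coprime d (n div d)"
    using assms(2) unfolding unitary_dvd_def by auto
  then have "d \<noteq> 0" "n div d \<noteq> 0"
    using assms(1) by auto
  have "\<not> p dvd n div d"
    using coprime assms(3,4) by (meson coprime_common_divisor not_prime_unit)
  then have "multiplicity p n = multiplicity p d + multiplicity p (n div d)"
    using \<open>d dvd n\<close> \<open>d \<noteq> 0\<close> \<open>n div d \<noteq> 0\<close> assms(3)
    by (metis dvd_mult_div_cancel prime_elem_multiplicity_mult_distrib prime_imp_prime_elem)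
  also have "multiplicity p (n div d) = 0"
    using \<open>\<not> p dvd n div d\<close> by (rule not_dvd_imp_multiplicity_0)
  finally show ?thesis
    by (simp add: multiplicity_dvd)
qed

lemma unitary_gcd_eq_1_iff:
  assumes "j > 0"
  shows "unitary_gcd j n = 1 \<longleftrightarrow> (\<forall>d. d dvd j \<longrightarrow> unitary_dvd d n \<longrightarrow> d = 1)"
proof -
  let ?M = "{d. d dvd j \<and> unitary_dvd d n}"
  have "finite ?M"
    using assms by (auto intro: finite_subset[of _ "{..j}"] dest: dvd_imp_le)
  moreover have "1 \<in> ?M"
    by (simp add: unitary_dvd_def)
  ultimately have "unitary_gcd j n = 1 \<longleftrightarrow> (\<forall>d\<in>?M. d \<le> 1)"
    unfolding unitary_gcd_def by (subst Max_eq_iff) auto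
  also have "\<dots> \<longleftrightarrow> (\<forall>d\<in>?M. d = 1)"
    using assms by (intro ball_cong) (auto dest: dvd_pos_nat)
  finally show ?thesis
    by blast
qed

definition prime_power_parts :: "nat \<Rightarrow> nat set" where
  "prime_power_parts n = (\<lambda>p. p ^ multiplicity p n) ` prime_factors n"

lemma prime_power_parts_gt_1:
  assumes "q \<in> prime_power_parts n"
  shows "q > 1"
proof -
  obtain p where "prime p" "multiplicity p n > 0" "q = p ^ multiplicity p n"
    using assms by (auto simp: prime_power_parts_def prime_factors_multiplicity)
  then show ?thesis
    by (metis one_less_power prime_gt_1_nat)
qed

lemma prime_power_parts_dvd: "q \<in> prime_power_parts n \<Longrightarrow> q dvd n"
  by (auto simp: prime_power_parts_def multiplicity_dvd)

lemma pairwise_coprime_prime_power_parts: "pairwise coprime (prime_power_parts n)"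
  unfolding prime_power_parts_def pairwise_def
  by (auto intro: primes_coprime)

lemma prime_power_parts_eq_empty_iff: "prime_power_parts n = {} \<longleftrightarrow> n \<le> 1"
  by (cases "n = 0") (auto simp: prime_power_parts_def prime_factorization_empty_iff)

lemma inj_on_prime_power_parts: "inj_on (\<lambda>p. p ^ multiplicity p n) (prime_factors n)"
  by (auto intro!: inj_onI dest: prime_power_inj'(1) simp: prime_factors_multiplicity)

lemma card_prime_power_parts: "card (prime_power_parts n) = card (prime_factors n)"
  unfolding prime_power_parts_def by (rule card_image[OF inj_on_prime_power_parts])

lemma prod_prime_power_parts: "n > 0 \<Longrightarrow> \<Prod>(prime_power_parts n) = n"
  unfolding prime_power_parts_def
  by (simp add: prod.reindex[OF inj_on_prime_power_parts] prod_prime_factors)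

lemma unitary_gcd_eq_1_iff_prime_power_parts:
  assumes "n > 0" "j > 0"
  shows "unitary_gcd j n = 1 \<longleftrightarrow> (\<forall>q\<in>prime_power_parts n. \<not> q dvd j)"
  unfolding unitary_gcd_eq_1_iff[OF assms(2)]
proof safe
  fix q
  assume "\<forall>d. d dvd j \<longrightarrow> unitary_dvd d n \<longrightarrow> d = 1" "q \<in> prime_power_parts n" "q dvd j"
  moreover from \<open>q \<in> prime_power_parts n\<close> have "unitary_dvd q n"
    by (auto simp: prime_power_parts_def intro: unitary_dvd_prime_power_part)
  moreover from \<open>q \<in> prime_power_parts n\<close> have "q > 1"
    by (rule prime_power_parts_gt_1)
  ultimately show False
    by auto
next
  fix d assume avoids: "\<forall>q\<in>prime_power_parts n. \<not> q dvd j" and "d dvd j" "unitary_dvd d n"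
  show "d = 1"
  proof (rule ccontr)
    assume "d \<noteq> 1"
    then obtain p where "prime p" "p dvd d"
      using prime_factor_nat by blast
    then have "p ^ multiplicity p n dvd d"
      using assms(1) \<open>unitary_dvd d n\<close> by (intro prime_power_part_dvd_unitary_divisor) auto
    moreover have "p \<in> prime_factors n"
      using \<open>prime p\<close> \<open>p dvd d\<close> \<open>unitary_dvd d n\<close> assms(1)
      by (auto simp: in_prime_factors_iff unitary_dvd_def intro: dvd_trans)
    ultimately show False
      using avoids \<open>d dvd j\<close> by (auto simp: prime_power_parts_def intro: dvd_trans)
  qed
qed

lemma primepow_iff_card_prime_factors: "primepow (n :: nat) \<longleftrightarrow> card (prime_factors n) = 1"
proof
  assume "primepow n"
  then obtain p k where "prime p" "k > 0" "n = p ^ k"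
    by (auto simp: primepow_def)
  then show "card (prime_factors n) = 1"
    by (simp add: prime_factorization_prime_power)
next
  assume "card (prime_factors n) = 1"
  then obtain p where p: "prime_factors n = {p}"
    by (auto simp: card_Suc_eq)
  then have "n > 0"
    by (cases "n = 0") auto
  moreover have "prime p" "multiplicity p n > 0"
    using p by (auto simp: prime_factors_multiplicity)
  moreover have "n = p ^ multiplicity p n"
    using prod_prime_factors[of n] p \<open>n > 0\<close> by simp
  ultimately show "primepow n"
    using primepowI by metis
qed

lemma primepow_iff_exists_prime_power:
  "primepow (n :: nat) \<longleftrightarrow> (\<exists>p e. prime p \<and> e \<ge> 1 \<and> n = p ^ e)"
  by (simp add: primepow_def Suc_le_eq)

lemma exp_unitary_mangoldt: "exp (unitary_mangoldt n) = (if primepow n then real n else 1)"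
proof (cases "primepow n")
  case True
  then obtain p k where pk: "prime p" "k > 0" "n = p ^ k"
    by (auto simp: primepow_def)
  have "(THE p. prime p \<and> p dvd n) = p"
    using pk by (auto intro!: the_equality dest: prime_dvd_power primes_dvd_imp_eq)
  moreover have "\<exists>p a. prime p \<and> a \<ge> 1 \<and> n = p ^ a"
    using True by (simp add: primepow_iff_exists_prime_power)
  ultimately have "unitary_mangoldt n = real k * ln (real p)"
    using pk by (simp add: unitary_mangoldt_def multiplicity_prime_power)
  then show ?thesis
    using True pk prime_gt_0_nat[of p] by (simp add: exp_of_nat_mult)
next
  case False
  then have "unitary_mangoldt n = 0"
    unfolding unitary_mangoldt_def primepow_iff_exists_prime_power by (rule if_not_P)
  with False show ?thesis
    by simp
qed

lemma poly_unitary_cyclotomic_at_1_eq_sieved_unity_prod: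
  assumes "n > 1"
  shows "poly (unitary_cyclotomic n) 1 = sieved_unity_prod n (prime_power_parts n)"
proof -
  have "\<exists>q\<in>prime_power_parts n. q dvd n"
    using assms prime_power_parts_eq_empty_iff[of n] prime_power_parts_dvd by fastforce
  then have "j \<in> {j. 1 \<le> j \<and> j \<le> n \<and> unitary_gcd j n = 1} \<longleftrightarrow>
        j \<in> {j. 0 < j \<and> j < n \<and> (\<forall>q\<in>prime_power_parts n. \<not> q dvd j)}" for j
    using assms unitary_gcd_eq_1_iff_prime_power_parts[of n j] by (cases "j = n") auto
  then have "{j. 1 \<le> j \<and> j \<le> n \<and> unitary_gcd j n = 1} =
        {j. 0 < j \<and> j < n \<and> (\<forall>q\<in>prime_power_parts n. \<not> q dvd j)}"
    by blast
  then show ?thesis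
    unfolding unitary_cyclotomic_def sieved_unity_prod_def by (simp add: poly_prod unity_root_def)
qed

lemma poly_unitary_cyclotomic_at_1:
  assumes "n > 1"
  shows "poly (unitary_cyclotomic n) 1 = (if primepow n then of_nat n else 1)"
proof -
  let ?D = "prime_power_parts n"
  have "\<forall>q\<in>?D. q > 1 \<and> q dvd n"
    using prime_power_parts_gt_1 prime_power_parts_dvd by blast
  then have "sieved_unity_prod n ?D = (if card ?D = 1 then of_nat (\<Prod>?D) else 1)"
    using assms prime_power_parts_eq_empty_iff[of n] pairwise_coprime_prime_power_parts[of n]
    by (subst sieved_unity_prod_coprime_divisors) (auto simp: prime_power_parts_def)
  then show ?thesis
    using assms by (simp add: poly_unitary_cyclotomic_at_1_eq_sieved_unity_prod card_prime_power_parts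
        primepow_iff_card_prime_factors prod_prime_power_parts)
qed

lemma unitary_cyclotomic_1: "unitary_cyclotomic 1 = [:-1, 1:]"
proof -
  have "{j. 1 \<le> j \<and> j \<le> 1 \<and> unitary_gcd j 1 = 1} = {1}"
    using unitary_gcd_eq_1_iff[of 1 1] by (auto simp: unitary_dvd_def)
  then show ?thesis
    unfolding unitary_cyclotomic_def by simp
qed

theorem lemma4p1:
  fixes n :: nat
  assumes "n \<ge> 1"
  shows "poly (unitary_cyclotomic n) 1 =
           (if n = 1 then 0
            else if \<exists>p e. prime p \<and> e \<ge> 1 \<and> n = p ^ e
            then of_nat n
            else 1)
         \<and> (n > 1 \<longrightarrow> poly (unitary_cyclotomic n) 1 = of_real (exp (unitary_mangoldt n)))"
proof (cases "n = 1")
  case True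
  then show ?thesis
    using unitary_cyclotomic_1 by simp
next
  case False
  with assms show ?thesis
    by (simp add: poly_unitary_cyclotomic_at_1 exp_unitary_mangoldt primepow_iff_exists_prime_power)
qed

end
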